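(* Let $N\ge3$, $\lambda\in\mathbb R$, and let $\mathbf P$ and $V$ be as defined below. Define the planar and non-planar tadpole amplitudes $$A^{\mathrm{pl}}_{x,y}=\frac{\lambda}{N^{3/2}}\sum_{a,b,c,d}\mathbf P_{x,a}\mathbf P_{y,b}\mathbf P_{c,d}V_{a,b,c,d},\qquad A^{\mathrm{np}}_{x,y}=\frac{\lambda}{N^{3/2}}\sum_{a,b,c,d}\mathbf P_{x,a}\mathbf P_{y,c}\mathbf P_{b,d}V_{a,b,c,d},$$ where $x,y,a,b,c,d$ range over $\{1,\dots,N\}^3$. Then $$A^{\mathrm{pl}}=\lambda\frac{(N-2)(4N-1)}{12N^{3/2}(N-1)}\,\mathbf P,\qquad A^{\mathrm{np}}=\lambda\frac{N^2-4}{3N^{3/2}(N-1)}\,\mathbf P,$$ and consequently $2A^{\mathrm{pl}}+A^{\mathrm{np}}=\lambda f_T(N)\mathbf P$ with $f_T(N)=\frac{(N-2)(2N+1)}{2N^{3/2}(N-1)}$, which is $O(N^{-1/2})$ as $N\to\infty$.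
   Context: Multi-indices $a=(a_1,a_2,a_3)\in\{1,\dots,N\}^3$. $\mathbf P$ is the symmetric kernel $\mathbf P_{a,b}=\tfrac13(\delta_{a_1b_1}\delta_{a_2b_2}\delta_{a_3b_3}-\delta_{a_1b_3}\delta_{a_2b_2}\delta_{a_3b_1})+\tfrac16(\delta_{a_1b_2}\delta_{a_2b_1}\delta_{a_3b_3}+\delta_{a_1b_1}\delta_{a_2b_3}\delta_{a_3b_2})-\tfrac16(\delta_{a_1b_2}\delta_{a_2b_3}\delta_{a_3b_1}+\delta_{a_1b_3}\delta_{a_2b_1}\delta_{a_3b_2})+\tfrac1{2(N-1)}(\delta_{a_1b_3}\delta_{a_2a_3}\delta_{b_1b_2}+\delta_{a_1a_2}\delta_{a_3b_1}\delta_{b_2b_3})-\tfrac1{2(N-1)}(\delta_{a_1b_1}\delta_{a_2a_3}\delta_{b_2b_3}+\delta_{a_1a_2}\delta_{a_3b_3}\delta_{b_1b_2})$, the orthogonal projector onto traceless tensors with mixed permutation symmetry (Young tableau with rows $\{1,2\},\{3\}$). The quartic ("complete" or tetrahedral) vertex kernel is $V_{a,b,c,d}=\delta_{a_3b_1}\delta_{b_3c_1}\delta_{c_3d_1}\delta_{d_3a_1}\delta_{a_2c_2}\delta_{b_2d_2}$, so that $\sum V_{a,b,c,d}T_aT_bT_cT_d=T_{i_1i_2i_3}T_{i_3i_4i_5}T_{i_5i_2i_6}T_{i_6i_4i_1}$. These are the tadpole contributions at first order in $\lambda$ to the two-point function of the model with partition function $\int d\mu_{\mathbf P}(T)\exp\big(\frac{\lambda}{4N^{3/2}}T_{i_1i_2i_3}T_{i_3i_4i_5}T_{i_5i_2i_6}T_{i_6i_4i_1}\big)$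 (adjacent external legs: planar, multiplicity 2; opposite external legs: non-planar, multiplicity 1). *)

theory Defs
  imports "HOL-Analysis.Analysis" "HOL-Library.Landau_Symbols"
begin

type_synonym midx = "nat \<times> nat \<times> nat"

definition idx :: "nat \<Rightarrow> midx set" where
  "idx N = {1..N} \<times> {1..N} \<times> {1..N}"

definition dl :: "nat \<Rightarrow> nat \<Rightarrow> real" where
  "dl i j = (if i = j then 1 else 0)"

text \<open>The projector P onto traceless mixed-symmetry tensors.\<close>
definition Pker :: "nat \<Rightarrow> midx \<Rightarrow> midx \<Rightarrow> real" where
  "Pker N a b = (case a of (a1,a2,a3) \<Rightarrow> case b of (b1,b2,b3) \<Rightarrow>
      1/3 * (dl a1 b1 * dl a2 b2 * dl a3 b3 - dl a1 b3 * dl a2 b2 * dl a3 b1)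
    + 1/6 * (dl a1 b2 * dl a2 b1 * dl a3 b3 + dl a1 b1 * dl a2 b3 * dl a3 b2)
    - 1/6 * (dl a1 b2 * dl a2 b3 * dl a3 b1 + dl a1 b3 * dl a2 b1 * dl a3 b2)
    + 1 / (2 * (real N - 1)) * (dl a1 b3 * dl a2 a3 * dl b1 b2 + dl a1 a2 * dl a3 b1 * dl b2 b3)
    - 1 / (2 * (real N - 1)) * (dl a1 b1 * dl a2 a3 * dl b2 b3 + dl a1 a2 * dl a3 b3 * dl b1 b2))"

definition Vker :: "midx \<Rightarrow> midx \<Rightarrow> midx \<Rightarrow> midx \<Rightarrow> real" where
  "Vker a b c d = (case a of (a1,a2,a3) \<Rightarrow> case b of (b1,b2,b3) \<Rightarrow>
      case c of (c1,c2,c3) \<Rightarrow> case d of (d1,d2,d3) \<Rightarrow>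
      dl a3 b1 * dl b3 c1 * dl c3 d1 * dl d3 a1 * dl a2 c2 * dl b2 d2)"

definition Apl :: "nat \<Rightarrow> real \<Rightarrow> midx \<Rightarrow> midx \<Rightarrow> real" where
  "Apl N lam x y = lam / real N powr (3/2) *
     (\<Sum>a\<in>idx N. \<Sum>b\<in>idx N. \<Sum>c\<in>idx N. \<Sum>d\<in>idx N.
        Pker N x a * Pker N y b * Pker N c d * Vker a b c d)"

definition Anp :: "nat \<Rightarrow> real \<Rightarrow> midx \<Rightarrow> midx \<Rightarrow> real" where
  "Anp N lam x y = lam / real N powr (3/2) *
     (\<Sum>a\<in>idx N. \<Sum>b\<in>idx N. \<Sum>c\<in>idx N. \<Sum>d\<in>idx N.
        Pker N x a * Pker N y c * Pker N b d * Vker a b c d)"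

definition fT :: "nat \<Rightarrow> real" where
  "fT N = (real N - 2) * (2 * real N + 1) / (2 * real N powr (3/2) * (real N - 1))"

end

theory Submission
  imports Defs "HOL-Real_Asymp.Real_Asymp"
begin

text \<open>
  Contracting the vertex with the internal propagator reduces each tadpole to a partial trace
  of \<open>P\<close>, which is a combination of Kronecker deltas.  Every row of \<open>P\<close> is antisymmetric under
  the exchange \<open>S\<close> of the first and third index and has vanishing cyclic sum under the index
  rotation \<open>C\<close>; together with \<open>P\<^sup>2 = P\<close> this gives \<open>PSP = -P\<close> and \<open>PCP = -P/2\<close>, the latter
  because conjugation by \<open>S\<close> turns \<open>PCP\<close> into \<open>PC\<^sup>2P\<close> while \<open>PCP + PC\<^sup>2P = -P\<^sup>2\<close>.  The planar
  diagram is \<open>P(\<alpha>S + \<gamma>C)P\<close>, and the non-planar one is, by tracelessness, a multiple of \<open>P\<^sup>2\<close>.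
\<close>

lemma sum_idx: "(\<Sum>x\<in>idx N. f x) = (\<Sum>i=1..N. \<Sum>j=1..N. \<Sum>k=1..N. f (i,j,k))"
  unfolding idx_def by (simp add: sum.cartesian_product)

lemma mem_idx_iff: "(a1,a2,a3) \<in> idx N \<longleftrightarrow> a1 \<in> {1..N} \<and> a2 \<in> {1..N} \<and> a3 \<in> {1..N}"
  by (simp add: idx_def)

lemma dl_commute: "dl i j = dl j i"
  by (simp add: dl_def)

lemma if_zero_mult: "(if P then x else 0) * (y :: 'a :: mult_zero) = (if P then x * y else 0)"
  by simp

lemma mult_if_zero: "(y :: 'a :: mult_zero) * (if P then x else 0) = (if P then y * x else 0)"
  by simp

lemma sum_if_zero:
  "(\<Sum>e\<in>S. if P then f e else (0 :: 'a :: comm_monoid_add)) = (if P then (\<Sum>e\<in>S. f e) else 0)"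
  by simp

text \<open>Sums of products of Kronecker deltas collapse with these rules, once the conditions
  are kept from being split (\<open>cong: if_cong split del: if_split\<close>).\<close>
lemmas delta_sum_simps = sum_idx mem_idx_iff dl_def if_zero_mult mult_if_zero sum_if_zero
  sum.distrib sum_subtractf distrib_left distrib_right left_diff_distrib right_diff_distrib

definition trace_weight :: "nat \<Rightarrow> real" where
  "trace_weight N = 1 / (2 * (real N - 1))"

lemma Pker_trace_weight: "Pker N a b = (case a of (a1,a2,a3) \<Rightarrow> case b of (b1,b2,b3) \<Rightarrow>
      1/3 * (dl a1 b1 * dl a2 b2 * dl a3 b3 - dl a1 b3 * dl a2 b2 * dl a3 b1)
    + 1/6 * (dl a1 b2 * dl a2 b1 * dl a3 b3 + dl a1 b1 * dl a2 b3 * dl a3 b2)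
    - 1/6 * (dl a1 b2 * dl a2 b3 * dl a3 b1 + dl a1 b3 * dl a2 b1 * dl a3 b2)
    + trace_weight N * (dl a1 b3 * dl a2 a3 * dl b1 b2 + dl a1 a2 * dl a3 b1 * dl b2 b3)
    - trace_weight N * (dl a1 b1 * dl a2 a3 * dl b2 b3 + dl a1 a2 * dl a3 b3 * dl b1 b2))"
  unfolding Pker_def trace_weight_def by simp

text \<open>Eliminating \<open>N\<close> in favour of the trace weight lets the field simplifier cancel the
  contributions of a trace over \<open>N\<close> values against the trace terms of \<open>P\<close>.\<close>
lemma real_eq_trace_weight: "N \<ge> 2 \<Longrightarrow> real N = 1 + 1 / (2 * trace_weight N)"
  unfolding trace_weight_def by (simp add: field_simps)

lemma trace_weight_nonzero: "N \<ge> 2 \<Longrightarrow> trace_weight N \<noteq> 0"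
  unfolding trace_weight_def by simp

definition swap13 :: "midx \<Rightarrow> midx" where
  "swap13 = (\<lambda>(a1,a2,a3). (a3,a2,a1))"

definition cyc :: "midx \<Rightarrow> midx" where
  "cyc = (\<lambda>(a1,a2,a3). (a3,a1,a2))"

lemma cyc_swap13: "cyc (swap13 a) = swap13 (cyc (cyc a))"
  by (cases a) (simp add: cyc_def swap13_def)

lemma sum_idx_swap13: "(\<Sum>a\<in>idx N. f (swap13 a)) = (\<Sum>a\<in>idx N. f a)"
  by (rule sum.reindex_bij_witness[where i = swap13 and j = swap13])
     (auto simp: swap13_def idx_def)

lemma Pker_sym: "Pker N x y = Pker N y x"
  by (cases x; cases y) (simp add: Pker_trace_weight dl_commute algebra_simps)

lemma Pker_swap13: "Pker N x (swap13 b) = - Pker N x b"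
  by (cases x; cases b) (simp add: Pker_trace_weight swap13_def dl_commute algebra_simps)

lemma Pker_cyc_sum: "Pker N x b + Pker N x (cyc b) + Pker N x (cyc (cyc b)) = 0"
  by (cases x; cases b) (simp add: Pker_trace_weight cyc_def dl_commute algebra_simps)

lemma Pker_young_invariant:
  "1/3 * (Pker N (x1,x2,x3) y - Pker N (x3,x2,x1) y)
    + 1/6 * (Pker N (x2,x1,x3) y + Pker N (x1,x3,x2) y)
    - 1/6 * (Pker N (x3,x1,x2) y + Pker N (x2,x3,x1) y) = Pker N (x1,x2,x3) y"
  by (cases y) (auto simp: Pker_trace_weight dl_def field_simps)

lemma Pker_trace12:
  assumes "x \<in> idx N" "c \<in> {1..N}" "N \<ge> 2"
  shows "(\<Sum>e=1..N. Pker N x (e,e,c)) = 0"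
  using assms by (cases x) (simp add: delta_sum_simps Pker_trace_weight cong: if_cong split del: if_split,
     auto simp: real_eq_trace_weight trace_weight_nonzero field_simps)

lemma Pker_trace23:
  assumes "x \<in> idx N" "c \<in> {1..N}" "N \<ge> 2"
  shows "(\<Sum>e=1..N. Pker N x (c,e,e)) = 0"
  using assms by (cases x) (simp add: delta_sum_simps Pker_trace_weight cong: if_cong split del: if_split,
     auto simp: real_eq_trace_weight trace_weight_nonzero field_simps)

lemma Pker_trace13: "(\<Sum>e=1..N. Pker N x (e,c,e)) = 0"
proof -
  have "Pker N x (e,c,e) = - Pker N x (e,c,e)" for e
    using Pker_swap13[of N x "(e,c,e)"] by (simp add: swap13_def)
  then show ?thesis by simp
qed

lemma Pker_partial_trace13:
  assumes "p \<in> {1..N}" "q \<in> {1..N}" "r \<in> {1..N}" "s \<in> {1..N}" "N \<ge> 2"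
  shows "(\<Sum>e=1..N. Pker N (p,q,e) (e,r,s)) =
     (1/6 - real N / 3 + trace_weight N) * dl p s * dl q r + (1/3 - real N / 6) * dl p r * dl q s
     + (real N - 2) * trace_weight N * dl p q * dl r s"
  using assms by (simp add: delta_sum_simps Pker_trace_weight cong: if_cong split del: if_split,
     auto simp: real_eq_trace_weight trace_weight_nonzero field_simps)

lemma Pker_partial_trace22:
  assumes "p \<in> {1..N}" "q \<in> {1..N}" "r \<in> {1..N}" "s \<in> {1..N}" "N \<ge> 2"
  shows "(\<Sum>e=1..N. Pker N (p,e,q) (r,e,s)) =
     (real N / 3 + 1/3 - 2 * trace_weight N) * (dl p r * dl q s - dl p s * dl q r)"
  using assms by (simp add: delta_sum_simps Pker_trace_weight cong: if_cong split del: if_split,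
     auto simp: real_eq_trace_weight trace_weight_nonzero field_simps)

lemma sum_Pker_mult:
  assumes "x \<in> idx N"
  shows "(\<Sum>a\<in>idx N. Pker N x a * f a) = (case x of (x1,x2,x3) \<Rightarrow>
      1/3 * (f (x1,x2,x3) - f (x3,x2,x1))
    + 1/6 * (f (x2,x1,x3) + f (x1,x3,x2))
    - 1/6 * (f (x3,x1,x2) + f (x2,x3,x1))
    + trace_weight N * (dl x2 x3 * (\<Sum>e=1..N. f (e,e,x1)) + dl x1 x2 * (\<Sum>e=1..N. f (x3,e,e)))
    - trace_weight N * (dl x2 x3 * (\<Sum>e=1..N. f (x1,e,e)) + dl x1 x2 * (\<Sum>e=1..N. f (e,e,x3))))"
proof -
  obtain x1 x2 x3 where "x = (x1,x2,x3)" "x1 \<in> {1..N}" "x2 \<in> {1..N}" "x3 \<in> {1..N}"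
    using assms by (cases x) (auto simp: mem_idx_iff)
  then show ?thesis
    by (simp add: delta_sum_simps Pker_trace_weight sum_distrib_left sum.swap[of _ "{1..N}" "{1..N}"]
        cong: if_cong split del: if_split)
qed

lemma Pker_idem:
  assumes "x \<in> idx N" "y \<in> idx N" "N \<ge> 2"
  shows "(\<Sum>a\<in>idx N. Pker N x a * Pker N a y) = Pker N x y"
proof -
  have traces: "(\<Sum>e=1..N. Pker N (e,e,c) y) = 0" "(\<Sum>e=1..N. Pker N (c,e,e) y) = 0"
    if "c \<in> {1..N}" for c
    using Pker_trace12[OF assms(2) that assms(3)] Pker_trace23[OF assms(2) that assms(3)]
    by (simp_all add: Pker_sym[of N _ y])
  obtain x1 x2 x3 where "x = (x1,x2,x3)" "x1 \<in> {1..N}" "x3 \<in> {1..N}"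
    using assms(1) by (cases x) (auto simp: mem_idx_iff)
  then show ?thesis
    unfolding sum_Pker_mult[OF assms(1)] using traces Pker_young_invariant by simp
qed

lemma Pker_sandwich_swap13:
  assumes "x \<in> idx N" "y \<in> idx N" "N \<ge> 2"
  shows "(\<Sum>a\<in>idx N. Pker N x a * Pker N y (swap13 a)) = - Pker N x y"
proof -
  have "Pker N y (swap13 a) = - Pker N a y" for a
    using Pker_swap13[of N y a] Pker_sym[of N y a] by simp
  then show ?thesis
    using Pker_idem[OF assms] by (simp add: sum_negf)
qed

lemma Pker_sandwich_cyc:
  assumes "x \<in> idx N" "y \<in> idx N" "N \<ge> 2"
  shows "(\<Sum>a\<in>idx N. Pker N x a * Pker N y (cyc a)) = - Pker N x y / 2"
proof -
  define S where "S g = (\<Sum>a\<in>idx N. Pker N x a * Pker N y (g a))" for g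
  have "S cyc = (\<Sum>a\<in>idx N. Pker N x (swap13 a) * Pker N y (cyc (swap13 a)))"
    unfolding S_def by (rule sum_idx_swap13[symmetric])
  also have "\<dots> = S (cyc \<circ> cyc)"
    unfolding S_def by (simp add: cyc_swap13 Pker_swap13)
  finally have S_cyc: "S cyc = S (cyc \<circ> cyc)" .
  have "Pker N y (cyc a) + Pker N y (cyc (cyc a)) = - Pker N a y" for a
    using Pker_cyc_sum[of N y a] Pker_sym[of N y a] by simp
  then have "S cyc + S (cyc \<circ> cyc) = (\<Sum>a\<in>idx N. Pker N x a * - Pker N a y)"
    unfolding S_def sum.distrib[symmetric] distrib_left[symmetric] by simp
  also have "\<dots> = - Pker N x y"
    using Pker_idem[OF assms] by (simp add: sum_negf)
  finally show ?thesis
    using S_cyc unfolding S_def by simp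
qed

lemma sum_Pker_Vker_planar:
  assumes "(a1,a2,a3) \<in> idx N" "(b1,b2,b3) \<in> idx N"
  shows "(\<Sum>c\<in>idx N. \<Sum>d\<in>idx N. Pker N c d * Vker (a1,a2,a3) (b1,b2,b3) c d)
     = dl a3 b1 * (\<Sum>e=1..N. Pker N (b3,a2,e) (e,b2,a1))"
  using assms by (simp add: delta_sum_simps Vker_def cong: if_cong split del: if_split)

lemma sum_Pker_Vker_nonplanar:
  assumes "(a1,a2,a3) \<in> idx N" "(c1,c2,c3) \<in> idx N"
  shows "(\<Sum>b\<in>idx N. \<Sum>d\<in>idx N. Pker N b d * Vker (a1,a2,a3) b (c1,c2,c3) d)
     = dl a2 c2 * (\<Sum>e=1..N. Pker N (a3,e,c1) (c3,e,a1))"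
  using assms by (simp add: delta_sum_simps Vker_def cong: if_cong split del: if_split)

lemma sum_Pker_Pker_Vker_planar:
  assumes "a \<in> idx N" "y \<in> idx N" "N \<ge> 2"
  shows "(\<Sum>b\<in>idx N. \<Sum>c\<in>idx N. \<Sum>d\<in>idx N. Pker N y b * Pker N c d * Vker a b c d)
    = (1/6 - real N / 3 + trace_weight N) * Pker N y (swap13 a)
      + (real N - 2) * trace_weight N * Pker N y (cyc a)"
proof -
  obtain a1 a2 a3 where a: "a = (a1,a2,a3)" "a1 \<in> {1..N}" "a2 \<in> {1..N}" "a3 \<in> {1..N}"
    using assms(1) by (cases a) (auto simp: mem_idx_iff)
  define \<alpha> \<beta> \<gamma> where "\<alpha> = 1/6 - real N / 3 + trace_weight N" and "\<beta> = 1/3 - real N / 6"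
    and "\<gamma> = (real N - 2) * trace_weight N"
  have inner: "(\<Sum>c\<in>idx N. \<Sum>d\<in>idx N. Pker N c d * Vker a b c d)
      = (case b of (b1,b2,b3) \<Rightarrow>
          dl a3 b1 * (\<alpha> * dl b3 a1 * dl a2 b2 + \<beta> * dl b3 b2 * dl a2 a1 + \<gamma> * dl b3 a2 * dl b2 a1))"
    if b: "b \<in> idx N" for b
  proof -
    obtain b1 b2 b3 where "b = (b1,b2,b3)" "b1 \<in> {1..N}" "b2 \<in> {1..N}" "b3 \<in> {1..N}"
      using b by (cases b) (auto simp: mem_idx_iff)
    then show ?thesis
      using sum_Pker_Vker_planar[of a1 a2 a3 N b1 b2 b3] Pker_partial_trace13[of b3 N a2 b2 a1]
        a assms(1,3) unfolding \<alpha>_def \<beta>_def \<gamma>_def by (simp add: mem_idx_iff)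
  qed
  have trace: "(\<Sum>e=1..N. Pker N y (a3,e,e) * \<beta>) = 0"
    using Pker_trace23[OF assms(2) a(4) assms(3)] by (simp add: sum_distrib_right[symmetric])
  have "(\<Sum>b\<in>idx N. \<Sum>c\<in>idx N. \<Sum>d\<in>idx N. Pker N y b * Pker N c d * Vker a b c d)
      = (\<Sum>b\<in>idx N. Pker N y b * (\<Sum>c\<in>idx N. \<Sum>d\<in>idx N. Pker N c d * Vker a b c d))"
    by (simp add: sum_distrib_left mult.assoc)
  also have "\<dots> = (\<Sum>b\<in>idx N. Pker N y b * (case b of (b1,b2,b3) \<Rightarrow>
        dl a3 b1 * (\<alpha> * dl b3 a1 * dl a2 b2 + \<beta> * dl b3 b2 * dl a2 a1 + \<gamma> * dl b3 a2 * dl b2 a1)))"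
    by (intro sum.cong refl arg_cong2[where f = "(*)"] inner)
  also have "\<dots> = \<alpha> * Pker N y (swap13 a) + \<gamma> * Pker N y (cyc a)"
    using a trace
    by (simp add: delta_sum_simps swap13_def cyc_def cong: if_cong split del: if_split)
  finally show ?thesis unfolding \<alpha>_def \<gamma>_def .
qed

lemma sum_Pker_Pker_Vker_nonplanar:
  assumes "a \<in> idx N" "y \<in> idx N" "N \<ge> 2"
  shows "(\<Sum>c\<in>idx N. \<Sum>b\<in>idx N. \<Sum>d\<in>idx N. Pker N y c * Pker N b d * Vker a b c d)
    = (real N / 3 + 1/3 - 2 * trace_weight N) * Pker N y a"
proof -
  obtain a1 a2 a3 where a: "a = (a1,a2,a3)" "a1 \<in> {1..N}" "a2 \<in> {1..N}" "a3 \<in> {1..N}"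
    using assms(1) by (cases a) (auto simp: mem_idx_iff)
  define \<mu> where "\<mu> = real N / 3 + 1/3 - 2 * trace_weight N"
  have inner: "(\<Sum>b\<in>idx N. \<Sum>d\<in>idx N. Pker N b d * Vker a b c d)
      = (case c of (c1,c2,c3) \<Rightarrow> dl a2 c2 * (\<mu> * (dl a3 c3 * dl c1 a1 - dl a3 a1 * dl c1 c3)))"
    if c: "c \<in> idx N" for c
  proof -
    obtain c1 c2 c3 where "c = (c1,c2,c3)" "c1 \<in> {1..N}" "c2 \<in> {1..N}" "c3 \<in> {1..N}"
      using c by (cases c) (auto simp: mem_idx_iff)
    then show ?thesis
      using sum_Pker_Vker_nonplanar[of a1 a2 a3 N c1 c2 c3] Pker_partial_trace22[of a3 N c1 c3 a1]
        a assms(1,3) unfolding \<mu>_def by (simp add: mem_idx_iff)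
  qed
  have trace: "(\<Sum>e=1..N. Pker N y (e,a2,e) * \<mu>) = 0"
    using Pker_trace13[of N y a2] by (simp add: sum_distrib_right[symmetric])
  have "(\<Sum>c\<in>idx N. \<Sum>b\<in>idx N. \<Sum>d\<in>idx N. Pker N y c * Pker N b d * Vker a b c d)
      = (\<Sum>c\<in>idx N. Pker N y c * (\<Sum>b\<in>idx N. \<Sum>d\<in>idx N. Pker N b d * Vker a b c d))"
    by (simp add: sum_distrib_left mult.assoc)
  also have "\<dots> = (\<Sum>c\<in>idx N. Pker N y c * (case c of (c1,c2,c3) \<Rightarrow>
        dl a2 c2 * (\<mu> * (dl a3 c3 * dl c1 a1 - dl a3 a1 * dl c1 c3))))"
    by (intro sum.cong refl arg_cong2[where f = "(*)"] inner)
  also have "\<dots> = \<mu> * Pker N y a"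
    using a trace by (simp add: delta_sum_simps cong: if_cong split del: if_split)
  finally show ?thesis unfolding \<mu>_def .
qed

lemma planar_tadpole_sum:
  assumes "x \<in> idx N" "y \<in> idx N" "N \<ge> 2"
  shows "(\<Sum>a\<in>idx N. \<Sum>b\<in>idx N. \<Sum>c\<in>idx N. \<Sum>d\<in>idx N.
            Pker N x a * Pker N y b * Pker N c d * Vker a b c d)
    = (real N - 2) * (4 * real N - 1) / (12 * (real N - 1)) * Pker N x y"
proof -
  define \<alpha> \<gamma> where "\<alpha> = 1/6 - real N / 3 + trace_weight N" and "\<gamma> = (real N - 2) * trace_weight N"
  have "(\<Sum>a\<in>idx N. \<Sum>b\<in>idx N. \<Sum>c\<in>idx N. \<Sum>d\<in>idx N.
            Pker N x a * Pker N y b * Pker N c d * Vker a b c d)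
      = (\<Sum>a\<in>idx N. Pker N x a * (\<Sum>b\<in>idx N. \<Sum>c\<in>idx N. \<Sum>d\<in>idx N.
            Pker N y b * Pker N c d * Vker a b c d))"
    by (simp add: sum_distrib_left mult.assoc)
  also have "\<dots> = (\<Sum>a\<in>idx N. Pker N x a * (\<alpha> * Pker N y (swap13 a) + \<gamma> * Pker N y (cyc a)))"
    unfolding \<alpha>_def \<gamma>_def
    by (intro sum.cong refl arg_cong2[where f = "(*)"] sum_Pker_Pker_Vker_planar assms(2,3))
  also have "\<dots> = \<alpha> * (\<Sum>a\<in>idx N. Pker N x a * Pker N y (swap13 a))
      + \<gamma> * (\<Sum>a\<in>idx N. Pker N x a * Pker N y (cyc a))"
    by (simp add: distrib_left sum.distrib sum_distrib_left mult.left_commute)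
  also have "\<dots> = (- \<alpha> - \<gamma> / 2) * Pker N x y"
    by (simp add: Pker_sandwich_swap13[OF assms] Pker_sandwich_cyc[OF assms] algebra_simps)
  also have "- \<alpha> - \<gamma> / 2 = (real N - 2) * (4 * real N - 1) / (12 * (real N - 1))"
    using trace_weight_nonzero[OF assms(3)] unfolding \<alpha>_def \<gamma>_def
    by (simp only: real_eq_trace_weight[OF assms(3)]) (simp add: field_simps)
  finally show ?thesis .
qed

lemma nonplanar_tadpole_sum:
  assumes "x \<in> idx N" "y \<in> idx N" "N \<ge> 2"
  shows "(\<Sum>a\<in>idx N. \<Sum>b\<in>idx N. \<Sum>c\<in>idx N. \<Sum>d\<in>idx N.
            Pker N x a * Pker N y c * Pker N b d * Vker a b c d)
    = (real N ^ 2 - 4) / (3 * (real N - 1)) * Pker N x y"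
proof -
  define \<mu> where "\<mu> = real N / 3 + 1/3 - 2 * trace_weight N"
  have "(\<Sum>a\<in>idx N. \<Sum>b\<in>idx N. \<Sum>c\<in>idx N. \<Sum>d\<in>idx N.
            Pker N x a * Pker N y c * Pker N b d * Vker a b c d)
      = (\<Sum>a\<in>idx N. Pker N x a * (\<Sum>c\<in>idx N. \<Sum>b\<in>idx N. \<Sum>d\<in>idx N.
            Pker N y c * Pker N b d * Vker a b c d))"
    by (simp add: sum_distrib_left mult.assoc, intro sum.cong refl sum.swap)
  also have "\<dots> = (\<Sum>a\<in>idx N. Pker N x a * (\<mu> * Pker N y a))"
    unfolding \<mu>_def
    by (intro sum.cong refl arg_cong2[where f = "(*)"] sum_Pker_Pker_Vker_nonplanar assms(2,3))
  also have "\<dots> = \<mu> * (\<Sum>a\<in>idx N. Pker N x a * Pker N a y)"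
    by (simp add: sum_distrib_left mult.left_commute Pker_sym[of N y])
  also have "\<dots> = \<mu> * Pker N x y"
    by (simp add: Pker_idem[OF assms])
  also have "\<mu> = (real N ^ 2 - 4) / (3 * (real N - 1))"
    using trace_weight_nonzero[OF assms(3)] unfolding \<mu>_def
    by (simp only: real_eq_trace_weight[OF assms(3)]) (simp add: field_simps power2_eq_square)
  finally show ?thesis .
qed

lemma Apl_eq:
  assumes "x \<in> idx N" "y \<in> idx N" "N \<ge> 2"
  shows "Apl N lam x y = lam * ((real N - 2) * (4 * real N - 1)
            / (12 * real N powr (3/2) * (real N - 1))) * Pker N x y"
  unfolding Apl_def planar_tadpole_sum[OF assms] by (simp add: field_simps)

lemma Anp_eq:
  assumes "x \<in> idx N" "y \<in> idx N" "N \<ge> 2"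
  shows "Anp N lam x y = lam * ((real N ^ 2 - 4)
            / (3 * real N powr (3/2) * (real N - 1))) * Pker N x y"
  unfolding Anp_def nonplanar_tadpole_sum[OF assms] by (simp add: field_simps)

lemma planar_nonplanar_combination:
  assumes "x \<in> idx N" "y \<in> idx N" "N \<ge> 2"
  shows "2 * Apl N lam x y + Anp N lam x y = lam * fT N * Pker N x y"
proof -
  define S D where "S = real N powr (3/2)" and "D = real N - 1"
  have "S \<noteq> 0" "D \<noteq> 0" using assms(3) unfolding S_def D_def by auto
  moreover have "real N = D + 1" unfolding D_def by simp
  ultimately show ?thesis
    unfolding Apl_eq[OF assms] Anp_eq[OF assms] fT_def S_def[symmetric]
    by (simp add: field_simps power2_eq_square)
qed

theorem mainTheorem4:
  fixes N :: nat and lam :: real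
  assumes "N \<ge> 3"
  shows "(\<forall>x\<in>idx N. \<forall>y\<in>idx N.
            Apl N lam x y = lam * ((real N - 2) * (4 * real N - 1)
                / (12 * real N powr (3/2) * (real N - 1))) * Pker N x y
          \<and> Anp N lam x y = lam * ((real N ^ 2 - 4)
                / (3 * real N powr (3/2) * (real N - 1))) * Pker N x y
          \<and> 2 * Apl N lam x y + Anp N lam x y = lam * fT N * Pker N x y)
         \<and> fT \<in> O(\<lambda>n. real n powr (-1/2))"
proof (intro conjI ballI)
  fix x y assume "x \<in> idx N" "y \<in> idx N"
  moreover have "N \<ge> 2" using assms by simp
  ultimately show "Apl N lam x y = lam * ((real N - 2) * (4 * real N - 1)
                / (12 * real N powr (3/2) * (real N - 1))) * Pker N x y"
    and "Anp N lam x y = lam * ((real N ^ 2 - 4)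
                / (3 * real N powr (3/2) * (real N - 1))) * Pker N x y"
    and "2 * Apl N lam x y + Anp N lam x y = lam * fT N * Pker N x y"
    by (rule Apl_eq, rule Anp_eq, rule planar_nonplanar_combination)
next
  show "fT \<in> O(\<lambda>n. real n powr (-1/2))"
    unfolding fT_def by real_asymp
qed

end
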